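(* Let $m,n$ be positive integers, $\psi:[1,\infty)\to(0,\infty)$ non-increasing and continuous, and let $r=\mathcal D_{m,n}(\psi):[t_0,\infty)\to\mathbb R$. For $t\in\mathbb R$ let $f_t=\mathrm{diag}(e^{t/m},\dots,e^{t/m},e^{-t/n},\dots,e^{-t/n})\in SL_{m+n}(\mathbb R)$ ($m$ entries $e^{t/m}$, $n$ entries $e^{-t/n}$), and let $\Delta(\Lambda)=\max_{\mathbf v\in\Lambda\setminus\{0\}}\log(1/\|\mathbf v\|)$ for lattices $\Lambda\subset\mathbb R^{m+n}$. Then a unimodular lattice $\Lambda\subset\mathbb R^{m+n}$ is $(\psi,n)$-approximable if and only if there exist arbitrarily large $t>0$ with $\Delta(f_t\Lambda)\ge r(t)$. In particular, a matrix $A\in M_{m,n}(\mathbb R)$ is $\psi$-approximable if and only if there exist arbitrarily large $t>0$ with $\Delta(f_t\Lambda_A)\ge r(t)$.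
   Context: $\|\cdot\|$ is the max norm. For $\mathbf v\in\mathbb R^{m+n}$, $\mathbf v^{(m)}$ = first $m$ coordinates, $\mathbf v_{(n)}$ = last $n$ coordinates. $\Lambda$ is $(\psi,n)$-approximable if there exist $\mathbf v\in\Lambda$ with $\|\mathbf v_{(n)}\|$ arbitrarily large and $\|\mathbf v^{(m)}\|^m\le\psi(\|\mathbf v_{(n)}\|^n)$. $A\in M_{m,n}(\mathbb R)$ is $\psi$-approximable if there are infinitely many $\mathbf q\in\mathbb Z^n$ with $\|A\mathbf q+\mathbf p\|^m\le\psi(\|\mathbf q\|^n)$ for some $\mathbf p\in\mathbb Z^m$. $\Lambda_A=\begin{pmatrix}I_m&A\\0&I_n\end{pmatrix}\mathbb Z^{m+n}$. $\mathcal D_{m,n}(\psi)$ is the unique continuous function $r:[t_0,\infty)\to\mathbb R$, with $t_0=-\frac n{m+n}\log\psi(1)$, such that $t\mapsto t-nr(t)$ is strictly increasing and tends to $\infty$, $t\mapsto t+mr(t)$ is nondecreasing, and $\psi(e^{t-nr(t)})=e^{-t-mr(t)}$ for all $t\ge t_0$. *)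

theory Defs
  imports "HOL-Analysis.Analysis"
begin

text \<open>We model \<real>^(m+n) as real^('m + 'n), where m = CARD('m), n = CARD('n).
  Coordinates Inl i (i :: 'm) are the first m coordinates, Inr j (j :: 'n) the last n.\<close>

definition maxnorm :: "real ^ 'k \<Rightarrow> real" where
  "maxnorm v = Max (range (\<lambda>k. \<bar>v $ k\<bar>))"

definition upper_norm :: "real ^ ('m::finite + 'n::finite) \<Rightarrow> real" where
  "upper_norm v = Max (range (\<lambda>i::'m. \<bar>v $ Inl i\<bar>))"

definition lower_norm :: "real ^ ('m::finite + 'n::finite) \<Rightarrow> real" where
  "lower_norm v = Max (range (\<lambda>j::'n. \<bar>v $ Inr j\<bar>))"

definition int_vecs :: "(real ^ 'k) set" where
  "int_vecs = {z. \<forall>k. z $ k \<in> \<int>}"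

definition unimodular_lattice :: "(real ^ 'k::finite) set \<Rightarrow> bool" where
  "unimodular_lattice L \<longleftrightarrow>
     (\<exists>g :: real ^ 'k ^ 'k. \<bar>det g\<bar> = 1 \<and> L = (\<lambda>z. g *v z) ` int_vecs)"

definition psi_n_approximable ::
  "(real \<Rightarrow> real) \<Rightarrow> (real ^ ('m::finite + 'n::finite)) set \<Rightarrow> bool" where
  "psi_n_approximable \<psi> L \<longleftrightarrow>
     (\<forall>R. \<exists>v\<in>L. lower_norm v > R \<and>
        (upper_norm v) ^ CARD('m) \<le> \<psi> ((lower_norm v) ^ CARD('n)))"

definition psi_approximable_matrix ::
  "(real \<Rightarrow> real) \<Rightarrow> real ^ 'n::finite ^ 'm::finite \<Rightarrow> bool" where
  "psi_approximable_matrix \<psi> A \<longleftrightarrow>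
     infinite {q :: real ^ 'n. q \<in> int_vecs \<and>
        (\<exists>p :: real ^ 'm. p \<in> int_vecs \<and>
           (maxnorm (A *v q + p)) ^ CARD('m) \<le> \<psi> ((maxnorm q) ^ CARD('n)))}"

text \<open>Lambda_A = [[I_m, A],[0, I_n]] Z^(m+n).\<close>
definition lattice_of :: "real ^ 'n::finite ^ 'm::finite \<Rightarrow> (real ^ ('m + 'n)) set" where
  "lattice_of A = {\<chi> k. (case k of Inl i \<Rightarrow> p $ i + (A *v q) $ i | Inr j \<Rightarrow> q $ j)
                    | p q. p \<in> int_vecs \<and> q \<in> int_vecs}"

definition flow :: "real \<Rightarrow> real ^ ('m::finite + 'n::finite) \<Rightarrow> real ^ ('m + 'n)" where
  "flow t v = (\<chi> k. (case k of Inl i \<Rightarrow> exp (t / real CARD('m)) * v $ k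
                              | Inr j \<Rightarrow> exp (- t / real CARD('n)) * v $ k))"

definition Delta :: "(real ^ 'k::finite) set \<Rightarrow> real" where
  "Delta L = Sup {ln (1 / maxnorm v) | v. v \<in> L \<and> v \<noteq> 0}"

definition is_D :: "nat \<Rightarrow> nat \<Rightarrow> (real \<Rightarrow> real) \<Rightarrow> (real \<Rightarrow> real) \<Rightarrow> bool" where
  "is_D m n \<psi> r \<longleftrightarrow>
     (let t0 = - (real n / real (m + n)) * ln (\<psi> 1) in
       continuous_on {t0..} r \<and>
       strict_mono_on {t0..} (\<lambda>t. t - real n * r t) \<and>
       filterlim (\<lambda>t. t - real n * r t) at_top at_top \<and>
       mono_on {t0..} (\<lambda>t. t + real m * r t) \<and>
       (\<forall>t\<ge>t0. \<psi> (exp (t - real n * r t)) = exp (- t - real m * r t)))"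

end

theory Submission
  imports Defs
begin

text \<open>Write v = (x, y) with x the first m and y the last n coordinates. By the defining
  equation of r, |f_t v| \<le> exp(-r(t)) says |x|^m \<le> \<psi>(exp(t - n r(t))) and
  |y|^n \<le> exp(t - n r(t)); as the maximum defining Delta is attained,
  Delta(f_t \<Lambda>) \<ge> r(t) means that some nonzero v \<in> \<Lambda> satisfies this. An approximant
  with |y| large satisfies it at the time t where exp(t - n r(t)) = |y|^n.

  Conversely, if \<Lambda> is not approximable, the vectors satisfying it at times t \<ge> t0 have
  bounded y (as \<psi> is non-increasing they would otherwise be approximants) and bounded x
  (as t + m r(t) is non-decreasing). So a single one of these finitely many vectors works for
  arbitrarily large t, which forces |x|^m \<le> \<psi>(s) for all large s. Dirichlet's pigeonhole
  principle then gives lattice vectors with upper part at most |x| and arbitrarily large lower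
  part: approximants after all. For a matrix A, the lattice \<Lambda>_A is the image of the
  integer lattice under an invertible shear.\<close>

lemma maxnorm_eq_infnorm: "maxnorm v = infnorm v"
  for v :: "real ^ 'k::finite"
  unfolding maxnorm_def infnorm_cart by (simp add: cSup_eq_Max full_SetCompr_eq)

lemma maxnorm_le_iff: "maxnorm v \<le> B \<longleftrightarrow> (\<forall>k. \<bar>v $ k\<bar> \<le> B)"
  for v :: "real ^ 'k::finite"
  unfolding maxnorm_def by (subst Max_le_iff) auto

lemma abs_le_maxnorm: "\<bar>v $ k\<bar> \<le> maxnorm v"
  for v :: "real ^ 'k::finite"
  unfolding maxnorm_def by (rule Max_ge) auto

lemma maxnorm_le_norm: "maxnorm v \<le> norm v"
  for v :: "real ^ 'k::finite"
  by (simp add: maxnorm_eq_infnorm infnorm_le_norm)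

lemma norm_le_maxnorm: "norm v \<le> sqrt (real CARD('k)) * maxnorm v"
  for v :: "real ^ 'k::finite"
  using norm_le_infnorm[of v] by (simp add: maxnorm_eq_infnorm)

lemma matrix_maxnorm_bounded:
  fixes M :: "real ^ 'k::finite ^ 'l::finite"
  obtains C where "C > 0" "\<And>x. maxnorm (M *v x) \<le> C * maxnorm x"
proof -
  obtain B where B: "B > 0" "\<And>x. norm (M *v x) \<le> norm x * B"
    using bounded_linear.pos_bounded[OF matrix_vector_mul_bounded_linear[of M]] by blast
  have "maxnorm (M *v x) \<le> (B * sqrt (real CARD('k))) * maxnorm x" for x
  proof -
    have "maxnorm (M *v x) \<le> norm x * B"
      using maxnorm_le_norm B(2) order_trans by blast
    also have "\<dots> \<le> sqrt (real CARD('k)) * maxnorm x * B"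
      using B(1) norm_le_maxnorm[of x] by (intro mult_right_mono) auto
    finally show ?thesis by (simp add: ac_simps)
  qed
  then show thesis using B(1) by (intro that[of "B * sqrt (real CARD('k))"]) auto
qed

lemma int_vecs_bounded_finite:
  "finite {z \<in> (int_vecs :: (real ^ 'k::finite) set). maxnorm z \<le> B}"
proof (rule finite_subset)
  let ?I = "{x::real. x \<in> \<int> \<and> \<bar>x\<bar> \<le> B}"
  show "{z \<in> int_vecs. maxnorm z \<le> B} \<subseteq> vec_lambda ` ((UNIV::'k set) \<rightarrow>\<^sub>E ?I)"
  proof
    fix z :: "real ^ 'k" assume "z \<in> {z \<in> int_vecs. maxnorm z \<le> B}"
    then have "vec_nth z \<in> UNIV \<rightarrow>\<^sub>E ?I"
      by (auto simp: int_vecs_def maxnorm_le_iff)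
    then show "z \<in> vec_lambda ` (UNIV \<rightarrow>\<^sub>E ?I)"
      by (rule rev_image_eqI) simp
  qed
  show "finite (vec_lambda ` ((UNIV::'k set) \<rightarrow>\<^sub>E ?I))"
    by (intro finite_imageI finite_PiE finite_abs_int_segment) auto
qed

lemma infinite_int_vecs_iff_unbounded:
  assumes "S \<subseteq> int_vecs"
  shows "infinite S \<longleftrightarrow> (\<forall>R. \<exists>z\<in>S. R < maxnorm z)"
proof
  assume "infinite S"
  show "\<forall>R. \<exists>z\<in>S. R < maxnorm z"
  proof (rule ccontr)
    assume "\<not> (\<forall>R. \<exists>z\<in>S. R < maxnorm z)"
    then obtain R where "S \<subseteq> {z \<in> int_vecs. maxnorm z \<le> R}"
      using assms by (auto simp: not_less)
    then show False
      using \<open>infinite S\<close> int_vecs_bounded_finite finite_subset by blast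
  qed
next
  assume unbounded: "\<forall>R. \<exists>z\<in>S. R < maxnorm z"
  show "infinite S"
  proof
    assume "finite S"
    then obtain z where "z \<in> S" "Max (insert 0 (maxnorm ` S)) < maxnorm z"
      using unbounded by blast
    with \<open>finite S\<close> show False
      using Max_ge[of "insert 0 (maxnorm ` S)" "maxnorm z"] by auto
  qed
qed

definition upper_part :: "real ^ ('m::finite + 'n::finite) \<Rightarrow> real ^ 'm" where
  "upper_part v = (\<chi> i. v $ Inl i)"

definition lower_part :: "real ^ ('m::finite + 'n::finite) \<Rightarrow> real ^ 'n" where
  "lower_part v = (\<chi> j. v $ Inr j)"

definition join_parts :: "real ^ 'm::finite \<Rightarrow> real ^ 'n::finite \<Rightarrow> real ^ ('m + 'n)" where
  "join_parts p q = (\<chi> k. case k of Inl i \<Rightarrow> p $ i | Inr j \<Rightarrow> q $ j)"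

lemma upper_part_join_parts [simp]: "upper_part (join_parts p q) = p"
  and lower_part_join_parts [simp]: "lower_part (join_parts p q) = q"
  and join_parts_upper_lower [simp]: "join_parts (upper_part v) (lower_part v) = v"
  by (auto simp: upper_part_def lower_part_def join_parts_def vec_eq_iff split: sum.split)

lemma join_parts_in_int_vecs_iff [simp]:
  "join_parts p q \<in> int_vecs \<longleftrightarrow> p \<in> int_vecs \<and> q \<in> int_vecs"
  by (auto simp: join_parts_def int_vecs_def split: sum.split)

lemma upper_norm_eq_maxnorm: "upper_norm v = maxnorm (upper_part v)"
  and lower_norm_eq_maxnorm: "lower_norm v = maxnorm (lower_part v)"
  by (simp_all add: upper_norm_def lower_norm_def maxnorm_def upper_part_def lower_part_def)

lemma upper_norm_le_iff: "upper_norm v \<le> B \<longleftrightarrow> (\<forall>i. \<bar>v $ Inl i\<bar> \<le> B)"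
  and lower_norm_le_iff: "lower_norm v \<le> B \<longleftrightarrow> (\<forall>j. \<bar>v $ Inr j\<bar> \<le> B)"
  by (simp_all add: upper_norm_eq_maxnorm lower_norm_eq_maxnorm maxnorm_le_iff
      upper_part_def lower_part_def)

lemma abs_le_upper_norm: "\<bar>v $ Inl i\<bar> \<le> upper_norm v"
  and abs_le_lower_norm: "\<bar>v $ Inr j\<bar> \<le> lower_norm v"
  using abs_le_maxnorm[of "upper_part v" i] abs_le_maxnorm[of "lower_part v" j]
  by (simp_all add: upper_norm_eq_maxnorm lower_norm_eq_maxnorm upper_part_def lower_part_def)

lemma upper_norm_nonneg: "0 \<le> upper_norm v"
  and lower_norm_nonneg: "0 \<le> lower_norm v"
  by (simp_all add: upper_norm_eq_maxnorm lower_norm_eq_maxnorm maxnorm_eq_infnorm infnorm_pos_le)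

lemma maxnorm_le_iff_upper_lower:
  "maxnorm v \<le> B \<longleftrightarrow> upper_norm v \<le> B \<and> lower_norm v \<le> B"
  unfolding maxnorm_le_iff upper_norm_le_iff lower_norm_le_iff by (rule split_sum_all)

definition basis_lattice :: "real ^ 'k::finite ^ 'k \<Rightarrow> (real ^ 'k) set" where
  "basis_lattice g = (\<lambda>z. g *v z) ` int_vecs"

lemma basis_lattice_bounded_finite:
  assumes "invertible g"
  shows "finite {v \<in> basis_lattice g. maxnorm v \<le> B}"
proof -
  obtain g' where g': "g' ** g = mat 1"
    using assms invertible_left_inverse by blast
  obtain C where C: "C > 0" "\<And>x. maxnorm (g' *v x) \<le> C * maxnorm x"
    using matrix_maxnorm_bounded by blast
  have "{v \<in> basis_lattice g. maxnorm v \<le> B} \<subseteq>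
      (\<lambda>z. g *v z) ` {z \<in> int_vecs. maxnorm z \<le> C * B}"
  proof
    fix v assume "v \<in> {v \<in> basis_lattice g. maxnorm v \<le> B}"
    then obtain z where z: "z \<in> int_vecs" "v = g *v z" and "maxnorm v \<le> B"
      by (auto simp: basis_lattice_def)
    have "maxnorm z = maxnorm (g' *v v)"
      using z(2) g' by (simp add: matrix_vector_mul_assoc)
    also have "\<dots> \<le> C * B"
      using C mult_left_mono[OF \<open>maxnorm v \<le> B\<close>, of C] by (smt (verit))
    finally show "v \<in> (\<lambda>z. g *v z) ` {z \<in> int_vecs. maxnorm z \<le> C * B}"
      using z by blast
  qed
  then show ?thesis
    by (rule finite_subset) (intro finite_imageI int_vecs_bounded_finite)
qed

lemma basis_lattice_nonzero:
  assumes "invertible g"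
  obtains v where "v \<in> basis_lattice g" "v \<noteq> 0"
proof
  have "(1 :: real ^ 'k) \<in> int_vecs"
    by (simp add: int_vecs_def)
  then show "g *v 1 \<in> basis_lattice g"
    unfolding basis_lattice_def by (rule imageI)
  obtain g' where "g' ** g = mat 1"
    using assms invertible_left_inverse by blast
  then have "g' *v (g *v 1) = 1"
    by (simp add: matrix_vector_mul_assoc)
  then show "g *v 1 \<noteq> 0"
    by auto
qed

lemma basis_lattice_scaleR_nat:
  assumes "v \<in> basis_lattice g"
  shows "real k *\<^sub>R v \<in> basis_lattice g"
proof -
  obtain z where z: "z \<in> int_vecs" "v = g *v z"
    using assms by (auto simp: basis_lattice_def)
  then have "real k *\<^sub>R v = g *v (real k *\<^sub>R z)"
    by (simp add: matrix_vector_mult_scaleR)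
  moreover have "real k *\<^sub>R z \<in> int_vecs"
    using z(1) by (simp add: int_vecs_def)
  ultimately show ?thesis
    unfolding basis_lattice_def by (rule image_eqI)
qed

lemma image_basis_lattice:
  assumes "linear f"
  shows "f ` basis_lattice g = basis_lattice (matrix f ** g)"
  unfolding basis_lattice_def image_image
  by (simp add: matrix_vector_mul_assoc[symmetric] matrix_vector_mul(2)[OF assms])

lemma invertible_matrix_if_left_inverse:
  fixes f h :: "real ^ 'k::finite \<Rightarrow> real ^ 'k"
  assumes "linear f" "linear h" "\<And>x. h (f x) = x"
  shows "invertible (matrix f)"
proof -
  have "h \<circ> f = id"
    using assms(3) by auto
  then have "matrix h ** matrix f = mat 1"
    using matrix_compose[OF assms(1,2)] by (simp add: matrix_id_mat_1)
  then show ?thesis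
    using invertible_left_inverse by blast
qed

section \<open>Dirichlet's pigeonhole principle\<close>

lemma floor_in_symmetric_range: "\<bar>x\<bar> \<le> c \<Longrightarrow> \<lfloor>x\<rfloor> \<in> {-\<lceil>c\<rceil>..\<lceil>c\<rceil>}"
  for x c :: real
  by (auto simp: le_floor_iff floor_le_iff abs_le_iff) (use le_of_int_ceiling[of c] in linarith)+

lemma abs_diff_less_one_if_floor_eq: "\<lfloor>x\<rfloor> = \<lfloor>y\<rfloor> \<Longrightarrow> \<bar>x - y\<bar> < 1"
  for x y :: real
proof -
  assume "\<lfloor>x\<rfloor> = \<lfloor>y\<rfloor>"
  then have "real_of_int \<lfloor>x\<rfloor> = real_of_int \<lfloor>y\<rfloor>"
    by simp
  then show ?thesis
    using floor_correct[of x] floor_correct[of y] unfolding abs_less_iff by linarith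
qed

lemma symmetric_box_card_less:
  fixes c K :: real
  assumes "0 \<le> c" "2 * c + 3 \<le> K * (real N + 1)" "K ^ m < real N + 1" "m < k"
  shows "nat (2 * \<lceil>c\<rceil> + 1) ^ m < (N + 1) ^ k"
proof -
  have "real (nat (2 * \<lceil>c\<rceil> + 1)) = 2 * real_of_int \<lceil>c\<rceil> + 1"
    using assms(1) by (simp add: of_nat_nat)
  also have "\<dots> \<le> K * (real N + 1)"
    using ceiling_correct[of c] assms(2) by linarith
  finally have "real (nat (2 * \<lceil>c\<rceil> + 1) ^ m) \<le> K ^ m * (real N + 1) ^ m"
    by (simp add: power_mult_distrib[symmetric] power_mono)
  also have "\<dots> < (real N + 1) ^ Suc m"
    using assms(3) by simp
  also have "\<dots> \<le> (real N + 1) ^ k"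
    using assms(4) by (intro power_increasing) auto
  finally show ?thesis
    by (metis of_nat_1 of_nat_add of_nat_less_iff of_nat_power)
qed

lemma floor_image_in_box:
  fixes P :: "real ^ 'k::finite ^ 'm::finite"
  assumes bounded: "\<And>x. maxnorm (P *v x) \<le> C * maxnorm x" and "0 \<le> C" "0 < \<rho>"
    and "maxnorm z \<le> N"
  shows "\<lfloor>(P *v z) $ i / \<rho>\<rfloor> \<in> {-\<lceil>C * N / \<rho>\<rceil>..\<lceil>C * N / \<rho>\<rceil>}"
proof (rule floor_in_symmetric_range)
  have "\<bar>(P *v z) $ i\<bar> \<le> C * N"
    using abs_le_maxnorm[of "P *v z" i] bounded[of z] mult_left_mono[OF assms(4,2)] by linarith
  then show "\<bar>(P *v z) $ i / \<rho>\<bar> \<le> C * N / \<rho>"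
    using \<open>0 < \<rho>\<close> by (simp add: abs_divide divide_right_mono)
qed

lemma exists_int_vec_pair_same_floors:
  fixes P :: "real ^ 'k::finite ^ 'm::finite"
  assumes dim: "CARD('m) < CARD('k)" and \<rho>: "0 < \<rho>"
  obtains z z' where "z \<in> int_vecs" "z' \<in> int_vecs" "z \<noteq> z'"
    "\<And>i. \<lfloor>(P *v z) $ i / \<rho>\<rfloor> = \<lfloor>(P *v z') $ i / \<rho>\<rfloor>"
proof -
  obtain C where C: "C > 0" "\<And>x. maxnorm (P *v x) \<le> C * maxnorm x"
    using matrix_maxnorm_bounded[of P] by blast
  \<comment> \<open>\<open>K\<close> is chosen so that the \<open>(N + 1)\<^sup>k\<close> points of the box \<open>[0, N]\<^sup>k\<close> outnumber
    the at most \<open>(K (N + 1))\<^sup>m\<close> cells of side \<open>\<rho>\<close> met by their images.\<close>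
  define K where "K = 2 * C / \<rho> + 3"
  obtain N :: nat where N: "K ^ CARD('m) < real N + 1"
    using reals_Archimedean2 by (smt (verit))
  define c where "c = C * real N / \<rho>"
  define ivec :: "('k \<Rightarrow> int) \<Rightarrow> real ^ 'k" where "ivec a = (\<chi> k. of_int (a k))" for a
  define A where "A = (UNIV :: 'k set) \<rightarrow>\<^sub>E {0..int N}"
  define B where "B = (UNIV :: 'm set) \<rightarrow>\<^sub>E {-\<lceil>c\<rceil>..\<lceil>c\<rceil>}"
  define \<phi> where "\<phi> a = (\<lambda>i. \<lfloor>(P *v ivec a) $ i / \<rho>\<rfloor>)" for a
  have "\<phi> ` A \<subseteq> B"
  proof
    fix b assume "b \<in> \<phi> ` A"
    then obtain a where "a \<in> A" "b = \<phi> a"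
      by blast
    have "0 \<le> a k \<and> real_of_int (a k) \<le> real N" for k
      using \<open>a \<in> A\<close> by (auto simp: A_def PiE_iff) (metis of_int_le_iff of_int_of_nat_eq)
    then have "maxnorm (ivec a) \<le> real N"
      by (simp add: ivec_def maxnorm_le_iff)
    then have "\<phi> a i \<in> {-\<lceil>c\<rceil>..\<lceil>c\<rceil>}" for i
      unfolding \<phi>_def c_def using C \<rho> by (intro floor_image_in_box) auto
    then show "b \<in> B"
      by (simp add: B_def PiE_iff \<open>b = \<phi> a\<close>)
  qed
  then have "card (\<phi> ` A) \<le> card B"
    by (rule card_mono[rotated]) (simp add: B_def finite_PiE)
  moreover have "card B < card A"
  proof -
    have "2 * c + 3 \<le> K * (real N + 1)"
      using C(1) \<rho> by (simp add: c_def K_def field_simps)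
    then have "nat (2 * \<lceil>c\<rceil> + 1) ^ CARD('m) < (N + 1) ^ CARD('k)"
      using C(1) \<rho> N dim by (intro symmetric_box_card_less) (auto simp: c_def)
    then show ?thesis
      by (simp add: A_def B_def card_PiE nat_add_distrib)
  qed
  ultimately have "\<not> inj_on \<phi> A"
    by (intro pigeonhole) simp
  then obtain a a' where a: "a \<noteq> a'" "\<phi> a = \<phi> a'"
    unfolding inj_on_def by blast
  show thesis
  proof
    show "ivec a \<in> int_vecs" "ivec a' \<in> int_vecs"
      by (simp_all add: ivec_def int_vecs_def)
    show "ivec a \<noteq> ivec a'"
      using a(1) by (auto simp: ivec_def vec_eq_iff)
    show "\<lfloor>(P *v ivec a) $ i / \<rho>\<rfloor> = \<lfloor>(P *v ivec a') $ i / \<rho>\<rfloor>" for i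
      using fun_cong[OF a(2), of i] by (simp add: \<phi>_def)
  qed
qed

lemma int_vec_with_small_image:
  fixes P :: "real ^ 'k::finite ^ 'm::finite"
  assumes "CARD('m) < CARD('k)" "0 < \<rho>"
  obtains z where "z \<in> int_vecs" "z \<noteq> 0" "maxnorm (P *v z) \<le> \<rho>"
proof -
  obtain z z' where z: "z \<in> int_vecs" "z' \<in> int_vecs" "z \<noteq> z'"
    "\<And>i. \<lfloor>(P *v z) $ i / \<rho>\<rfloor> = \<lfloor>(P *v z') $ i / \<rho>\<rfloor>"
    using exists_int_vec_pair_same_floors[OF assms] by blast
  have "\<bar>(P *v (z - z')) $ i\<bar> \<le> \<rho>" for i
  proof -
    have "\<bar>(P *v z) $ i / \<rho> - (P *v z') $ i / \<rho>\<bar> < 1"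
      using z(4) by (rule abs_diff_less_one_if_floor_eq)
    then show ?thesis
      using \<open>0 < \<rho>\<close> by (simp add: matrix_vector_mult_diff_distrib
          diff_divide_distrib[symmetric] abs_divide divide_less_eq)
  qed
  moreover have "z - z' \<in> int_vecs"
    using z(1,2) by (simp add: int_vecs_def)
  ultimately show thesis
    using that z(3) by (simp add: maxnorm_le_iff)
qed

lemma exists_small_upper_norm:
  fixes g :: "real ^ ('m::finite + 'n::finite) ^ ('m + 'n)"
  assumes "invertible g" "0 < \<rho>"
  obtains v where "v \<in> basis_lattice g" "v \<noteq> 0" "upper_norm v \<le> \<rho>"
proof -
  define P :: "real ^ ('m + 'n) ^ 'm" where "P = (\<chi> i. g $ Inl i)"
  have "CARD('m) < CARD('m + 'n)"
    by simp
  then obtain z where z: "z \<in> int_vecs" "z \<noteq> 0" "maxnorm (P *v z) \<le> \<rho>"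
    using assms(2) by (rule int_vec_with_small_image)
  show thesis
  proof (rule that)
    show "g *v z \<in> basis_lattice g"
      using z(1) unfolding basis_lattice_def by (rule imageI)
    obtain g' where "g' ** g = mat 1"
      using assms(1) invertible_left_inverse by blast
    then have "g' *v (g *v z) = z"
      by (simp add: matrix_vector_mul_assoc)
    then show "g *v z \<noteq> 0"
      using z(2) by (metis matrix_vector_mult_0_right)
    have "upper_part (g *v z) = P *v z"
      by (simp add: upper_part_def P_def matrix_vector_mult_def vec_eq_iff)
    then show "upper_norm (g *v z) \<le> \<rho>"
      using z(3) by (simp add: upper_norm_eq_maxnorm)
  qed
qed

lemma vertical_vector_unbounded:
  assumes "v \<in> basis_lattice g" "v \<noteq> 0" "upper_norm v = 0"
  obtains w where "w \<in> basis_lattice g" "upper_norm w = 0" "R < lower_norm w"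
proof -
  have upper_zero: "v $ Inl i = 0" for i
    using abs_le_upper_norm[of v i] assms(3) by simp
  obtain k where "v $ k \<noteq> 0"
    using assms(2) by (metis vec_eq_iff zero_index)
  then obtain j where "v $ Inr j \<noteq> 0"
    using upper_zero by (cases k) auto
  then obtain k :: nat where k: "R < real k * \<bar>v $ Inr j\<bar>"
    using ex_less_of_nat_mult[of "\<bar>v $ Inr j\<bar>" R] by auto
  show thesis
  proof
    show "real k *\<^sub>R v \<in> basis_lattice g"
      using assms(1) by (rule basis_lattice_scaleR_nat)
    show "upper_norm (real k *\<^sub>R v) = 0"
      using upper_norm_nonneg[of "real k *\<^sub>R v"] by (simp add: upper_norm_le_iff upper_zero eq_iff)
    show "R < lower_norm (real k *\<^sub>R v)"
      using k abs_le_lower_norm[of "real k *\<^sub>R v" j] by (simp add: abs_mult)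
  qed
qed

lemma small_upper_norm_unbounded:
  fixes g :: "real ^ ('m::finite + 'n::finite) ^ ('m + 'n)"
  assumes g: "invertible g" and "0 < \<rho>"
  shows "\<exists>w\<in>basis_lattice g. upper_norm w \<le> \<rho> \<and> R < lower_norm w"
proof (rule ccontr)
  assume "\<not> ?thesis"
  then have bounded: "lower_norm w \<le> R" if "w \<in> basis_lattice g" "upper_norm w \<le> \<rho>" for w
    using that by (auto simp: not_less)
  define S where "S = {w \<in> basis_lattice g. w \<noteq> 0 \<and> upper_norm w \<le> \<rho>}"
  have "S \<subseteq> {w \<in> basis_lattice g. maxnorm w \<le> max \<rho> R}"
  proof
    fix w assume "w \<in> S"
    then have "w \<in> basis_lattice g" "upper_norm w \<le> \<rho>"
      by (simp_all add: S_def)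
    then show "w \<in> {w \<in> basis_lattice g. maxnorm w \<le> max \<rho> R}"
      using bounded[of w] by (auto simp: maxnorm_le_iff_upper_lower intro: max.coboundedI1 max.coboundedI2)
  qed
  then have "finite S"
    using basis_lattice_bounded_finite[OF g] by (rule finite_subset)
  show False
  proof (cases "\<exists>w\<in>S. upper_norm w = 0")
    case True
    then obtain w where "w \<in> S" "upper_norm w = 0"
      by blast
    then have "w \<in> basis_lattice g" "w \<noteq> 0" "upper_norm w = 0"
      by (simp_all add: S_def)
    then obtain w' where "w' \<in> basis_lattice g" "upper_norm w' = 0" "R < lower_norm w'"
      by (rule vertical_vector_unbounded)
    then show False
      using bounded[of w'] \<open>0 < \<rho>\<close> by simp
  next
    case False
    define \<mu> where "\<mu> = Min (insert \<rho> (upper_norm ` S))"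
    have "\<mu> \<in> insert \<rho> (upper_norm ` S)"
      unfolding \<mu>_def using \<open>finite S\<close> by (intro Min_in) auto
    then have "0 < \<mu>"
      using False \<open>0 < \<rho>\<close> upper_norm_nonneg less_eq_real_def by auto
    then obtain v where v: "v \<in> basis_lattice g" "v \<noteq> 0" "upper_norm v \<le> min \<rho> (\<mu> / 2)"
      using exists_small_upper_norm[OF g, of "min \<rho> (\<mu> / 2)"] \<open>0 < \<rho>\<close> by auto
    then have "v \<in> S"
      by (simp add: S_def)
    then have "\<mu> \<le> upper_norm v"
      using \<open>finite S\<close> by (simp add: \<mu>_def)
    then show False
      using v(3) \<open>0 < \<mu>\<close> by linarith
  qed
qed

lemma dominated_upper_norm_unbounded:
  assumes "invertible g" "v \<in> basis_lattice g" "v \<noteq> 0"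
  shows "\<exists>w\<in>basis_lattice g. upper_norm w \<le> upper_norm v \<and> R < lower_norm w"
proof (cases "upper_norm v = 0")
  case True
  obtain w where "w \<in> basis_lattice g" "upper_norm w = 0" "R < lower_norm w"
    using assms(2,3) True by (rule vertical_vector_unbounded)
  then show ?thesis
    using True by (metis order_refl)
next
  case False
  then have "0 < upper_norm v"
    using upper_norm_nonneg[of v] by simp
  then show ?thesis
    by (rule small_upper_norm_unbounded[OF assms(1)])
qed

section \<open>The diagonal flow and \<open>Delta\<close>\<close>

lemma flow_nth_Inl [simp]: "flow t v $ Inl i = exp (t / real CARD('m)) * v $ Inl i"
  and flow_nth_Inr [simp]: "flow t v $ Inr j = exp (- t / real CARD('n)) * v $ Inr j"
  for v :: "real ^ ('m::finite + 'n::finite)"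
  by (simp_all add: flow_def)

lemma linear_flow: "linear (flow t)"
  by (rule linearI) (simp_all add: flow_def vec_eq_iff algebra_simps split: sum.split)

lemma flow_flow: "flow s (flow t v) = flow (s + t) v"
  by (simp add: flow_def vec_eq_iff mult_exp_exp add_divide_distrib diff_divide_distrib
      split: sum.split)

lemma flow_0: "flow 0 v = v"
  by (simp add: flow_def vec_eq_iff split: sum.split)

lemma flow_uminus_flow [simp]: "flow (- t) (flow t v) = v"
  by (simp add: flow_flow flow_0)

lemma flow_eq_0_iff [simp]: "flow t v = 0 \<longleftrightarrow> v = 0"
  by (metis flow_uminus_flow linear_0[OF linear_flow])

lemma invertible_matrix_flow: "invertible (matrix (flow t))"
  using linear_flow linear_flow flow_uminus_flow by (rule invertible_matrix_if_left_inverse)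

lemma pow_le_exp_mult_iff:
  fixes u :: real
  assumes "0 \<le> u" "0 < k"
  shows "u ^ k \<le> exp (real k * a) \<longleftrightarrow> u \<le> exp a"
  using assms by (simp add: exp_of_nat_mult power_mono_iff)

lemma maxnorm_flow_le_exp_iff:
  fixes v :: "real ^ ('m::finite + 'n::finite)"
  shows "maxnorm (flow t v) \<le> exp (- \<rho>) \<longleftrightarrow>
    upper_norm v ^ CARD('m) \<le> exp (- t - real CARD('m) * \<rho>) \<and>
    lower_norm v ^ CARD('n) \<le> exp (t - real CARD('n) * \<rho>)"
proof -
  have "- t - real CARD('m) * \<rho> = real CARD('m) * (- \<rho> - t / real CARD('m))"
    and "t - real CARD('n) * \<rho> = real CARD('n) * (- \<rho> + t / real CARD('n))"
    by (simp_all add: algebra_simps)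
  moreover have "exp a * x \<le> exp b \<longleftrightarrow> x \<le> exp (b - a)" for a b x :: real
    by (simp add: exp_diff pos_le_divide_eq mult.commute)
  ultimately show ?thesis
    unfolding maxnorm_le_iff_upper_lower upper_norm_le_iff lower_norm_le_iff
    by (simp add: abs_mult pow_le_exp_mult_iff upper_norm_nonneg lower_norm_nonneg
        flip: upper_norm_le_iff lower_norm_le_iff)
qed

lemma ex_max_if_finite_superlevel_sets:
  fixes f :: "'a \<Rightarrow> real"
  assumes "w0 \<in> W" and "\<And>a. finite {w \<in> W. a \<le> f w}"
  obtains w where "w \<in> W" "\<And>w'. w' \<in> W \<Longrightarrow> f w' \<le> f w"
proof -
  let ?F = "{w \<in> W. f w0 \<le> f w}"
  obtain w where w: "w \<in> ?F" "f w = Max (f ` ?F)"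
    using assms Max_in[of "f ` ?F"] by fastforce
  show thesis
  proof
    show "w \<in> W"
      using w(1) by simp
    show "f w' \<le> f w" if "w' \<in> W" for w'
    proof (cases "f w0 \<le> f w'")
      case True
      then show ?thesis
        using w(2) that assms(2) by simp
    next
      case False
      then show ?thesis
        using w(1) by simp
    qed
  qed
qed

lemma le_ln_one_over_iff:
  fixes x \<rho> :: real
  assumes "0 < x"
  shows "\<rho> \<le> ln (1 / x) \<longleftrightarrow> x \<le> exp (- \<rho>)"
proof -
  have "x \<le> exp (- \<rho>) \<longleftrightarrow> ln x \<le> - \<rho>"
    using assms ln_le_cancel_iff[of x "exp (- \<rho>)"] by simp
  then show ?thesis
    using assms by (simp add: ln_div) linarith
qed

lemma Delta_ge_iff:
  fixes L :: "(real ^ 'k::finite) set"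
  assumes "v0 \<in> L" "v0 \<noteq> 0" and bounded_finite: "\<And>B. finite {v \<in> L. maxnorm v \<le> B}"
  shows "\<rho> \<le> Delta L \<longleftrightarrow> (\<exists>v\<in>L. v \<noteq> 0 \<and> maxnorm v \<le> exp (- \<rho>))"
proof -
  define W where "W = L - {0}"
  define f where "f v = ln (1 / maxnorm v)" for v :: "real ^ 'k"
  have f_ge_iff: "a \<le> f v \<longleftrightarrow> maxnorm v \<le> exp (- a)" if "v \<in> W" for a v
    using that by (simp add: W_def f_def le_ln_one_over_iff maxnorm_eq_infnorm infnorm_pos_lt)
  have "finite {w \<in> W. a \<le> f w}" for a
    using bounded_finite[of "exp (- a)"] by (rule rev_finite_subset) (auto simp: f_ge_iff W_def)
  then obtain w where w: "w \<in> W" "\<And>w'. w' \<in> W \<Longrightarrow> f w' \<le> f w"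
    using assms(1,2) ex_max_if_finite_superlevel_sets[of v0 W f] unfolding W_def by blast
  have "Delta L = Sup (f ` W)"
    unfolding Delta_def by (rule arg_cong[where f = Sup]) (auto simp: W_def f_def)
  also have "\<dots> = f w"
    using w by (intro cSup_eq_maximum) auto
  finally have Delta: "Delta L = f w" .
  have "\<rho> \<le> Delta L \<longleftrightarrow> (\<exists>w\<in>W. \<rho> \<le> f w)"
  proof
    assume "\<exists>w'\<in>W. \<rho> \<le> f w'"
    then obtain w' where "w' \<in> W" "\<rho> \<le> f w'"
      by blast
    then show "\<rho> \<le> Delta L"
      using Delta w(2)[of w'] by linarith
  qed (use Delta w(1) in auto)
  then show ?thesis
    using f_ge_iff by (auto simp: W_def)
qed

lemma Delta_flow_basis_lattice_ge_iff:
  assumes "invertible g"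
  shows "\<rho> \<le> Delta (flow t ` basis_lattice g) \<longleftrightarrow>
    (\<exists>v\<in>basis_lattice g. v \<noteq> 0 \<and> maxnorm (flow t v) \<le> exp (- \<rho>))"
proof -
  have inv: "invertible (matrix (flow t) ** g)"
    using invertible_matrix_flow assms by (rule invertible_mult)
  obtain v0 where "v0 \<in> basis_lattice (matrix (flow t) ** g)" "v0 \<noteq> 0"
    using inv by (rule basis_lattice_nonzero)
  then have "\<rho> \<le> Delta (flow t ` basis_lattice g) \<longleftrightarrow>
      (\<exists>w\<in>flow t ` basis_lattice g. w \<noteq> 0 \<and> maxnorm w \<le> exp (- \<rho>))"
    unfolding image_basis_lattice[OF linear_flow]
    using basis_lattice_bounded_finite[OF inv] by (rule Delta_ge_iff)
  then show ?thesis
    by auto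
qed

section \<open>The function \<open>r\<close> attached to \<open>\<psi>\<close>\<close>

text \<open>The properties of \<open>is_D\<close> that are used, with \<open>t\<^sub>0\<close> left free.\<close>

locale D_function =
  fixes m n :: nat and \<psi> r :: "real \<Rightarrow> real" and t0 :: real
  assumes continuous: "continuous_on {t0..} r"
    and exponent_tendsto: "filterlim (\<lambda>t. t - real n * r t) at_top at_top"
    and envelope_mono: "mono_on {t0..} (\<lambda>t. t + real m * r t)"
    and psi_exp: "\<And>t. t0 \<le> t \<Longrightarrow> \<psi> (exp (t - real n * r t)) = exp (- t - real m * r t)"
begin

lemma exponent_attains:
  assumes "t0 \<le> a" "a - real n * r a \<le> c"
  obtains t where "a \<le> t" "t - real n * r t = c"
proof -
  obtain b0 where b0: "\<And>t. b0 \<le> t \<Longrightarrow> c \<le> t - real n * r t"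
    using exponent_tendsto unfolding filterlim_at_top eventually_at_top_linorder by blast
  have "continuous_on {a..max a b0} (\<lambda>t. t - real n * r t)"
    using assms(1) by (intro continuous_intros continuous_on_subset[OF continuous]) auto
  then obtain t where "a \<le> t" "t \<le> max a b0" "t - real n * r t = c"
    using IVT'[of "\<lambda>t. t - real n * r t" a c "max a b0"] assms(2) b0[of "max a b0"] by auto
  then show thesis
    using that by blast
qed

lemma envelope_antimono:
  assumes "t0 \<le> s" "s \<le> t"
  shows "exp (- t - real m * r t) \<le> exp (- s - real m * r s)"
  using mono_onD[OF envelope_mono, of s t] assms by simp

lemma le_psi_if_below_envelope:
  assumes below: "\<And>s. t0 \<le> s \<Longrightarrow> u \<le> exp (- s - real m * r s)"
    and x: "exp (t0 - real n * r t0) \<le> x"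
  shows "u \<le> \<psi> x"
proof -
  have "0 < x"
    using x exp_gt_zero order_less_le_trans by blast
  then have "t0 - real n * r t0 \<le> ln x"
    using x by (simp add: ln_ge_iff)
  then obtain s where "t0 \<le> s" "s - real n * r s = ln x"
    by (rule exponent_attains[OF order_refl])
  then show ?thesis
    using below psi_exp \<open>0 < x\<close> by force
qed

end

lemma D_function_if_is_D:
  assumes "is_D m n \<psi> r"
  shows "D_function m n \<psi> r (- (real n / real (m + n)) * ln (\<psi> 1))"
  using assms unfolding is_D_def Let_def D_function_def by blast

section \<open>Approximable lattices and the flow\<close>

lemma exists_flow_small_if_approximant:
  fixes v :: "real ^ ('m::finite + 'n::finite)"
  assumes D: "D_function CARD('m) CARD('n) \<psi> r t0" and "t0 \<le> T"
    and lower: "exp (T - real CARD('n) * r T) \<le> lower_norm v ^ CARD('n)"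
    and approximant: "upper_norm v ^ CARD('m) \<le> \<psi> (lower_norm v ^ CARD('n))"
  obtains t where "T \<le> t" "maxnorm (flow t v) \<le> exp (- r t)"
proof -
  define y where "y = lower_norm v ^ CARD('n)"
  have "0 < y"
    using lower exp_gt_zero order_less_le_trans unfolding y_def by blast
  then have "T - real CARD('n) * r T \<le> ln y"
    using lower by (simp add: y_def ln_ge_iff)
  then obtain t where t: "T \<le> t" "t - real CARD('n) * r t = ln y"
    using D_function.exponent_attains[OF D \<open>t0 \<le> T\<close>] by blast
  then have y_eq: "y = exp (t - real CARD('n) * r t)"
    using \<open>0 < y\<close> by simp
  moreover have "\<psi> y = exp (- t - real CARD('m) * r t)"
    using D_function.psi_exp[OF D] t(1) \<open>t0 \<le> T\<close> y_eq by simp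
  ultimately have "maxnorm (flow t v) \<le> exp (- r t)"
    using approximant unfolding maxnorm_flow_le_exp_iff y_def by simp
  then show thesis
    using that t(1) by blast
qed

lemma approximant_if_flow_small:
  fixes v :: "real ^ ('m::finite + 'n::finite)"
  assumes D: "D_function CARD('m) CARD('n) \<psi> r t0" and antimono: "antimono_on {1..} \<psi>"
    and "t0 \<le> t" "maxnorm (flow t v) \<le> exp (- r t)" "1 \<le> lower_norm v"
  shows "upper_norm v ^ CARD('m) \<le> \<psi> (lower_norm v ^ CARD('n))"
proof -
  have "1 \<le> lower_norm v ^ CARD('n)"
    using assms(5) by (rule one_le_power)
  moreover have "lower_norm v ^ CARD('n) \<le> exp (t - real CARD('n) * r t)"
    using assms(4) by (simp add: maxnorm_flow_le_exp_iff)
  ultimately have "\<psi> (exp (t - real CARD('n) * r t)) \<le> \<psi> (lower_norm v ^ CARD('n))"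
    using monotone_onD[OF antimono] by simp
  moreover have "upper_norm v ^ CARD('m) \<le> exp (- t - real CARD('m) * r t)"
    using assms(4) by (simp add: maxnorm_flow_le_exp_iff)
  ultimately show ?thesis
    using D_function.psi_exp[OF D \<open>t0 \<le> t\<close>] by simp
qed

lemma upper_norm_below_envelope_if_flow_small:
  fixes v :: "real ^ ('m::finite + 'n::finite)"
  assumes D: "D_function CARD('m) CARD('n) \<psi> r t0"
    and "t0 \<le> s" "s \<le> t" "maxnorm (flow t v) \<le> exp (- r t)"
  shows "upper_norm v ^ CARD('m) \<le> exp (- s - real CARD('m) * r s)"
proof -
  have "upper_norm v ^ CARD('m) \<le> exp (- t - real CARD('m) * r t)"
    using assms(4) by (simp add: maxnorm_flow_le_exp_iff)
  also have "\<dots> \<le> exp (- s - real CARD('m) * r s)"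
    using D assms(2,3) by (rule D_function.envelope_antimono)
  finally show ?thesis .
qed

lemma approximable_if_upper_norm_below_psi:
  assumes "invertible g" "v \<in> basis_lattice g" "v \<noteq> 0"
    and below: "\<And>x. X \<le> x \<Longrightarrow> upper_norm v ^ CARD('m) \<le> \<psi> x"
  shows "psi_n_approximable \<psi> (basis_lattice g :: (real ^ ('m::finite + 'n::finite)) set)"
  unfolding psi_n_approximable_def
proof
  fix R
  obtain w where w: "w \<in> basis_lattice g" "upper_norm w \<le> upper_norm v"
    "max R (max 1 X) < lower_norm w"
    using dominated_upper_norm_unbounded[OF assms(1-3)] by blast
  have "lower_norm w \<le> lower_norm w ^ CARD('n)"
    using w(3) by (simp add: self_le_power)
  then have "upper_norm v ^ CARD('m) \<le> \<psi> (lower_norm w ^ CARD('n))"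
    using w(3) by (intro below) linarith
  with power_mono[OF w(2) upper_norm_nonneg]
  have "upper_norm w ^ CARD('m) \<le> \<psi> (lower_norm w ^ CARD('n))"
    by (rule order_trans)
  moreover have "R < lower_norm w"
    using w(3) by linarith
  ultimately show "\<exists>w\<in>basis_lattice g. R < lower_norm w \<and>
      upper_norm w ^ CARD('m) \<le> \<psi> (lower_norm w ^ CARD('n))"
    using w(1) by blast
qed

lemma frequently_Delta_ge_if_approximable:
  fixes g :: "real ^ ('m::finite + 'n::finite) ^ ('m + 'n)"
  assumes D: "D_function CARD('m) CARD('n) \<psi> r t0" and g: "invertible g"
    and approximable: "psi_n_approximable \<psi> (basis_lattice g)"
  shows "\<forall>T. \<exists>t>T. t > 0 \<and> r t \<le> Delta (flow t ` basis_lattice g)"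
proof
  fix T
  define T' where "T' = max T (max t0 0) + 1"
  obtain v where v: "v \<in> basis_lattice g" "max 1 (exp (T' - real CARD('n) * r T')) < lower_norm v"
    "upper_norm v ^ CARD('m) \<le> \<psi> (lower_norm v ^ CARD('n))"
    using approximable unfolding psi_n_approximable_def by blast
  have "lower_norm v \<le> lower_norm v ^ CARD('n)"
    using v(2) by (simp add: self_le_power)
  then have "exp (T' - real CARD('n) * r T') \<le> lower_norm v ^ CARD('n)"
    using v(2) by linarith
  moreover have "t0 \<le> T'"
    by (simp add: T'_def)
  ultimately obtain t where "T' \<le> t" "maxnorm (flow t v) \<le> exp (- r t)"
    using exists_flow_small_if_approximant[OF D _ _ v(3)] by blast
  moreover have "v \<noteq> 0"
    using v(2) by (auto simp: lower_norm_def)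
  ultimately have "r t \<le> Delta (flow t ` basis_lattice g)"
    using v(1) by (auto simp: Delta_flow_basis_lattice_ge_iff[OF g])
  moreover have "T < t" "0 < t"
    using \<open>T' \<le> t\<close> by (simp_all add: T'_def)
  ultimately show "\<exists>t>T. t > 0 \<and> r t \<le> Delta (flow t ` basis_lattice g)"
    by blast
qed

lemma flow_small_bounded_if_not_approximable:
  fixes L :: "(real ^ ('m::finite + 'n::finite)) set"
  assumes D: "D_function CARD('m) CARD('n) \<psi> r t0" and antimono: "antimono_on {1..} \<psi>"
    and not_approximable: "\<not> psi_n_approximable \<psi> L"
  obtains B where
    "\<And>t v. t0 \<le> t \<Longrightarrow> v \<in> L \<Longrightarrow> maxnorm (flow t v) \<le> exp (- r t) \<Longrightarrow> maxnorm v \<le> B"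
proof -
  obtain R where R: "\<And>v. v \<in> L \<Longrightarrow> R < lower_norm v \<Longrightarrow>
      \<psi> (lower_norm v ^ CARD('n)) < upper_norm v ^ CARD('m)"
    using not_approximable unfolding psi_n_approximable_def by (auto simp: not_le)
  define U where "U = exp (- t0 - real CARD('m) * r t0)"
  have "maxnorm v \<le> max (max R 1) (max U 1)"
    if "t0 \<le> t" "v \<in> L" and small: "maxnorm (flow t v) \<le> exp (- r t)" for t v
  proof -
    have "lower_norm v \<le> max R 1"
    proof (rule ccontr)
      assume "\<not> lower_norm v \<le> max R 1"
      then have "R < lower_norm v" "1 \<le> lower_norm v"
        by simp_all
      then show False
        using R[OF that(2)] approximant_if_flow_small[OF D antimono that(1) small] by simp
    qed
    moreover have "upper_norm v \<le> max U 1"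
    proof (cases "upper_norm v \<le> 1")
      case False
      then have "upper_norm v \<le> upper_norm v ^ CARD('m)"
        by (simp add: self_le_power)
      also have "\<dots> \<le> U"
        unfolding U_def using D order_refl that(1) small
        by (rule upper_norm_below_envelope_if_flow_small)
      finally show ?thesis
        by simp
    qed simp
    ultimately show ?thesis
      by (auto simp: maxnorm_le_iff_upper_lower intro: max.coboundedI1 max.coboundedI2)
  qed
  then show thesis
    using that by blast
qed

lemma frequently_witness_in_finite_set:
  assumes "finite F" and frequently: "\<forall>T::real. \<exists>t>T. \<exists>v\<in>F. P t v"
  shows "\<exists>v\<in>F. \<forall>T. \<exists>t>T. P t v"
proof (rule ccontr)
  assume "\<not> ?thesis"
  then have "\<forall>v\<in>F. \<exists>T. \<forall>t>T. \<not> P t v"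
    by blast
  then have "\<forall>v\<in>F. eventually (\<lambda>t. \<not> P t v) at_top"
    by (simp add: eventually_at_top_dense)
  then have "eventually (\<lambda>t. \<forall>v\<in>F. \<not> P t v) at_top"
    using \<open>finite F\<close> by (rule eventually_ball_finite[rotated])
  then obtain T where "\<And>t. T < t \<Longrightarrow> \<forall>v\<in>F. \<not> P t v"
    by (auto simp: eventually_at_top_dense)
  then show False
    using frequently by blast
qed

lemma frequently_flow_small_vector_if_not_approximable:
  fixes g :: "real ^ ('m::finite + 'n::finite) ^ ('m + 'n)"
  assumes D: "D_function CARD('m) CARD('n) \<psi> r t0" and antimono: "antimono_on {1..} \<psi>"
    and g: "invertible g" and "\<not> psi_n_approximable \<psi> (basis_lattice g)"
    and frequently: "\<forall>T. \<exists>t>T. t > 0 \<and> r t \<le> Delta (flow t ` basis_lattice g)"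
  obtains v where "v \<in> basis_lattice g" "v \<noteq> 0"
    "\<forall>T. \<exists>t>T. maxnorm (flow t v) \<le> exp (- r t)"
proof -
  obtain B where bounded: "\<And>t v. t0 \<le> t \<Longrightarrow> v \<in> basis_lattice g \<Longrightarrow>
      maxnorm (flow t v) \<le> exp (- r t) \<Longrightarrow> maxnorm v \<le> B"
    using \<open>\<not> psi_n_approximable \<psi> (basis_lattice g)\<close>
    by (rule flow_small_bounded_if_not_approximable[OF D antimono]) auto
  define F where "F = {v \<in> basis_lattice g. v \<noteq> 0 \<and> maxnorm v \<le> B}"
  have "\<forall>T. \<exists>t>T. \<exists>v\<in>F. maxnorm (flow t v) \<le> exp (- r t)"
  proof
    fix T
    obtain t where t: "max T t0 < t" "r t \<le> Delta (flow t ` basis_lattice g)"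
      using frequently by blast
    then obtain v where v: "v \<in> basis_lattice g" "v \<noteq> 0" "maxnorm (flow t v) \<le> exp (- r t)"
      by (auto simp: Delta_flow_basis_lattice_ge_iff[OF g])
    then have "v \<in> F"
      using bounded[of t v] t(1) by (simp add: F_def)
    then show "\<exists>t>T. \<exists>v\<in>F. maxnorm (flow t v) \<le> exp (- r t)"
      using t(1) v(3) by (intro exI[of _ t]) auto
  qed
  moreover have "finite F"
    using basis_lattice_bounded_finite[OF g, of B] by (rule rev_finite_subset) (auto simp: F_def)
  ultimately obtain v where "v \<in> F" "\<forall>T. \<exists>t>T. maxnorm (flow t v) \<le> exp (- r t)"
    using frequently_witness_in_finite_set[of F "\<lambda>t v. maxnorm (flow t v) \<le> exp (- r t)"]
    by blast
  then show thesis
    using that[of v] by (simp add: F_def)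
qed

lemma approximable_if_frequently_flow_small:
  fixes g :: "real ^ ('m::finite + 'n::finite) ^ ('m + 'n)"
  assumes D: "D_function CARD('m) CARD('n) \<psi> r t0" and g: "invertible g"
    and v: "v \<in> basis_lattice g" "v \<noteq> 0"
    and frequently: "\<forall>T. \<exists>t>T. maxnorm (flow t v) \<le> exp (- r t)"
  shows "psi_n_approximable \<psi> (basis_lattice g)"
proof -
  have "upper_norm v ^ CARD('m) \<le> exp (- s - real CARD('m) * r s)" if "t0 \<le> s" for s
  proof -
    obtain t where "s < t" "maxnorm (flow t v) \<le> exp (- r t)"
      using frequently by blast
    with D that show ?thesis
      by (rule upper_norm_below_envelope_if_flow_small[OF _ _ less_imp_le])
  qed
  then have "upper_norm v ^ CARD('m) \<le> \<psi> x" if "exp (t0 - real CARD('n) * r t0) \<le> x" for x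
    using that by (rule D_function.le_psi_if_below_envelope[OF D])
  with g v show ?thesis
    by (rule approximable_if_upper_norm_below_psi)
qed

lemma approximable_if_frequently_Delta_ge:
  fixes g :: "real ^ ('m::finite + 'n::finite) ^ ('m + 'n)"
  assumes D: "D_function CARD('m) CARD('n) \<psi> r t0" and antimono: "antimono_on {1..} \<psi>"
    and g: "invertible g"
    and frequently: "\<forall>T. \<exists>t>T. t > 0 \<and> r t \<le> Delta (flow t ` basis_lattice g)"
  shows "psi_n_approximable \<psi> (basis_lattice g)"
proof (rule ccontr)
  assume "\<not> psi_n_approximable \<psi> (basis_lattice g)"
  then obtain v where "v \<in> basis_lattice g" "v \<noteq> 0"
    "\<forall>T. \<exists>t>T. maxnorm (flow t v) \<le> exp (- r t)"
    using frequently_flow_small_vector_if_not_approximable[OF D antimono g _ frequently] by blast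
  then have "psi_n_approximable \<psi> (basis_lattice g)"
    by (rule approximable_if_frequently_flow_small[OF D g])
  then show False
    using \<open>\<not> psi_n_approximable \<psi> (basis_lattice g)\<close> by contradiction
qed

lemma approximable_iff_frequently_Delta_ge:
  fixes g :: "real ^ ('m::finite + 'n::finite) ^ ('m + 'n)"
  assumes "D_function CARD('m) CARD('n) \<psi> r t0" "antimono_on {1..} \<psi>" "invertible g"
  shows "psi_n_approximable \<psi> (basis_lattice g) \<longleftrightarrow>
    (\<forall>T. \<exists>t>T. t > 0 \<and> Delta (flow t ` basis_lattice g) \<ge> r t)"
  using assms frequently_Delta_ge_if_approximable approximable_if_frequently_Delta_ge by blast

section \<open>Matrices\<close>

definition shear :: "real ^ 'n::finite ^ 'm::finite \<Rightarrow> real ^ ('m + 'n) \<Rightarrow> real ^ ('m + 'n)" where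
  "shear A v = join_parts (upper_part v + A *v lower_part v) (lower_part v)"

lemma shear_nth_Inl [simp]: "shear A v $ Inl i = v $ Inl i + (A *v lower_part v) $ i"
  and shear_nth_Inr [simp]: "shear A v $ Inr j = v $ Inr j"
  by (simp_all add: shear_def join_parts_def upper_part_def lower_part_def)

lemma linear_shear:
  fixes A :: "real ^ 'n::finite ^ 'm::finite"
  shows "linear (shear A)"
proof
  have lower_part_linear: "lower_part (x + y) = lower_part x + lower_part y"
    "lower_part (c *\<^sub>R x) = c *\<^sub>R lower_part x" for x y :: "real ^ ('m + 'n)" and c
    by (simp_all add: lower_part_def vec_eq_iff)
  show "shear A (x + y) = shear A x + shear A y" for x y
    by (simp add: vec_eq_iff split_sum_all lower_part_linear matrix_vector_right_distrib)
  show "shear A (c *\<^sub>R x) = c *\<^sub>R shear A x" for c x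
    by (simp add: vec_eq_iff split_sum_all lower_part_linear matrix_vector_mult_scaleR
        algebra_simps)
qed

lemma shear_uminus_shear: "shear (- A) (shear A v) = v"
proof -
  have "(- A) *v q = - (A *v q)" for q
    by (simp add: matrix_vector_mult_def vec_eq_iff sum_negf)
  then show ?thesis
    by (simp add: shear_def)
qed

lemma lattice_of_eq_join_parts:
  "lattice_of A = {join_parts (A *v q + p) q | p q. p \<in> int_vecs \<and> q \<in> int_vecs}"
proof -
  have "(\<chi> k. case k of Inl i \<Rightarrow> p $ i + (A *v q) $ i | Inr j \<Rightarrow> q $ j) = join_parts (A *v q + p) q"
    for p q
    by (simp add: join_parts_def vec_eq_iff add.commute split: sum.split)
  then show ?thesis
    unfolding lattice_of_def by simp
qed

lemma lattice_of_eq_basis_lattice: "lattice_of A = basis_lattice (matrix (shear A))"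
proof -
  have "lattice_of A = shear A ` int_vecs"
  proof (unfold lattice_of_eq_join_parts, intro equalityI subsetI)
    fix v assume "v \<in> {join_parts (A *v q + p) q | p q. p \<in> int_vecs \<and> q \<in> int_vecs}"
    then obtain p q where "p \<in> int_vecs" "q \<in> int_vecs" "v = join_parts (A *v q + p) q"
      by blast
    then show "v \<in> shear A ` int_vecs"
      by (intro rev_image_eqI[of "join_parts p q"]) (simp_all add: shear_def add.commute)
  next
    fix v assume "v \<in> shear A ` int_vecs"
    then obtain z where "z \<in> int_vecs" "v = shear A z"
      by blast
    moreover from this have "upper_part z \<in> int_vecs" "lower_part z \<in> int_vecs"
      using join_parts_in_int_vecs_iff[of "upper_part z" "lower_part z"] by simp_all
    ultimately show "v \<in> {join_parts (A *v q + p) q | p q. p \<in> int_vecs \<and> q \<in> int_vecs}"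
      by (auto simp: shear_def add.commute)
  qed
  also have "\<dots> = shear A ` basis_lattice (mat 1)"
    by (simp add: basis_lattice_def)
  also have "\<dots> = basis_lattice (matrix (shear A))"
    by (simp add: image_basis_lattice[OF linear_shear])
  finally show ?thesis .
qed

lemma invertible_matrix_shear: "invertible (matrix (shear A))"
  using linear_shear linear_shear shear_uminus_shear by (rule invertible_matrix_if_left_inverse)

lemma psi_approximable_matrix_iff:
  fixes A :: "real ^ 'n::finite ^ 'm::finite"
  shows "psi_approximable_matrix \<psi> A \<longleftrightarrow> psi_n_approximable \<psi> (lattice_of A)"
proof -
  define Q where "Q = {q. q \<in> int_vecs \<and> (\<exists>p. p \<in> int_vecs \<and>
      maxnorm (A *v q + p) ^ CARD('m) \<le> \<psi> (maxnorm q ^ CARD('n)))}"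
  have "(\<exists>v\<in>lattice_of A. R < lower_norm v \<and>
      upper_norm v ^ CARD('m) \<le> \<psi> (lower_norm v ^ CARD('n))) \<longleftrightarrow> (\<exists>q\<in>Q. R < maxnorm q)"
    for R
  proof
    assume "\<exists>v\<in>lattice_of A. R < lower_norm v \<and>
      upper_norm v ^ CARD('m) \<le> \<psi> (lower_norm v ^ CARD('n))"
    then obtain p q where "p \<in> int_vecs" "q \<in> int_vecs" "R < maxnorm q"
      "maxnorm (A *v q + p) ^ CARD('m) \<le> \<psi> (maxnorm q ^ CARD('n))"
      by (auto simp: lattice_of_eq_join_parts upper_norm_eq_maxnorm lower_norm_eq_maxnorm)
    then show "\<exists>q\<in>Q. R < maxnorm q"
      by (auto simp: Q_def)
  next
    assume "\<exists>q\<in>Q. R < maxnorm q"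
    then obtain p q where "p \<in> int_vecs" "q \<in> int_vecs" "R < maxnorm q"
      "maxnorm (A *v q + p) ^ CARD('m) \<le> \<psi> (maxnorm q ^ CARD('n))"
      by (auto simp: Q_def)
    then show "\<exists>v\<in>lattice_of A. R < lower_norm v \<and>
      upper_norm v ^ CARD('m) \<le> \<psi> (lower_norm v ^ CARD('n))"
      by (intro bexI[of _ "join_parts (A *v q + p) q"])
        (auto simp: lattice_of_eq_join_parts upper_norm_eq_maxnorm lower_norm_eq_maxnorm)
  qed
  then have "psi_n_approximable \<psi> (lattice_of A) \<longleftrightarrow> (\<forall>R. \<exists>q\<in>Q. R < maxnorm q)"
    by (simp add: psi_n_approximable_def)
  also have "\<dots> \<longleftrightarrow> infinite Q"
    by (rule infinite_int_vecs_iff_unbounded[symmetric]) (auto simp: Q_def)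
  finally show ?thesis
    by (simp add: psi_approximable_matrix_def Q_def)
qed

theorem theorem8p5:
  fixes \<psi> :: "real \<Rightarrow> real" and r :: "real \<Rightarrow> real"
  assumes psi_pos: "\<forall>x\<ge>1. \<psi> x > 0"
    and psi_noninc: "antimono_on {1..} \<psi>"
    and psi_cont: "continuous_on {1..} \<psi>"
    and r_D: "is_D CARD('m::finite) CARD('n::finite) \<psi> r"
  shows "(\<forall>L :: (real ^ ('m + 'n)) set. unimodular_lattice L \<longrightarrow>
            (psi_n_approximable \<psi> L \<longleftrightarrow>
             (\<forall>T. \<exists>t>T. t > 0 \<and> Delta (flow t ` L) \<ge> r t)))
       \<and> (\<forall>A :: real ^ 'n ^ 'm.
            psi_approximable_matrix \<psi> A \<longleftrightarrow>
             (\<forall>T. \<exists>t>T. t > 0 \<and> Delta (flow t ` lattice_of A) \<ge> r t))"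
proof -
  have lattice_case: "psi_n_approximable \<psi> (basis_lattice g) \<longleftrightarrow>
      (\<forall>T. \<exists>t>T. t > 0 \<and> Delta (flow t ` basis_lattice g) \<ge> r t)"
    if "invertible g" for g :: "real ^ ('m + 'n) ^ ('m + 'n)"
    using D_function_if_is_D[OF r_D] psi_noninc that by (rule approximable_iff_frequently_Delta_ge)
  show ?thesis
  proof (intro conjI allI impI)
    fix L :: "(real ^ ('m + 'n)) set"
    assume "unimodular_lattice L"
    then obtain g where "\<bar>det g\<bar> = 1" "L = basis_lattice g"
      unfolding unimodular_lattice_def basis_lattice_def by blast
    then show "psi_n_approximable \<psi> L \<longleftrightarrow> (\<forall>T. \<exists>t>T. t > 0 \<and> Delta (flow t ` L) \<ge> r t)"
      using lattice_case by (simp add: invertible_det_nz)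
  next
    fix A :: "real ^ 'n ^ 'm"
    show "psi_approximable_matrix \<psi> A \<longleftrightarrow>
        (\<forall>T. \<exists>t>T. t > 0 \<and> Delta (flow t ` lattice_of A) \<ge> r t)"
      unfolding psi_approximable_matrix_iff lattice_of_eq_basis_lattice
      using invertible_matrix_shear by (rule lattice_case)
  qed
qed

end
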